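(* For groups with topology $G_1,G_2$, the canonical epimorphism $k:F_M(G_1\sqcup G_2)\to\tau(G_1)\ast\tau(G_2)$, which sends each generator $g\in G_i$ to the element $g$ of the factor $\tau(G_i)$, is a topological quotient map.
   Context: A group with topology is a group with an arbitrary topology. $G_1\sqcup G_2$ is the topological disjoint union. $F_M(S)$ is the free (Markov) topological group on a space $S$. For a group with topology $G$, $\tau(G)$ is $G$ with the quotient topology with respect to the multiplication epimorphism $m_G:F_M(G)\to G$ sending each generator $g$ to $g$. For topological groups $H_1,H_2$, $H_1\ast H_2$ is the free topological product, i.e. the coproduct in the category of topological groups (underlying group the free product). *)

theory Defs
  imports "HOL-Analysis.Product_Topology" "HOL-Algebra.Group"
begin

text \<open>A group with topology is a group G together with an arbitrary topology T
  with topspace T = carrier G.  A group topology is one for which multiplication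
  and inversion are continuous (no separation axiom required).\<close>

definition group_topology :: "'a monoid \<Rightarrow> 'a topology \<Rightarrow> bool" where
  "group_topology G T \<longleftrightarrow>
     topspace T = carrier G \<and>
     continuous_map (prod_topology T T) T (\<lambda>(x, y). x \<otimes>\<^bsub>G\<^esub> y) \<and>
     continuous_map T T (\<lambda>x. inv\<^bsub>G\<^esub> x)"

definition finest_group_topology :: "'a monoid \<Rightarrow> ('a topology \<Rightarrow> bool) \<Rightarrow> 'a topology" where
  "finest_group_topology G P =
     (THE T. group_topology G T \<and> P T \<and>
        (\<forall>T'. group_topology G T' \<and> P T' \<longrightarrow> (\<forall>U. openin T' U \<longrightarrow> openin T U)))"

definition quotient_topology :: "'a topology \<Rightarrow> ('a \<Rightarrow> 'b) \<Rightarrow> 'b set \<Rightarrow> 'b topology" where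
  "quotient_topology X f Y =
     topology (\<lambda>U. U \<subseteq> Y \<and> openin X {x \<in> topspace X. f x \<in> U})"

definition disjoint_union_topology :: "'a topology \<Rightarrow> 'b topology \<Rightarrow> ('a + 'b) topology" where
  "disjoint_union_topology T1 T2 =
     topology (\<lambda>U. U \<subseteq> Inl ` topspace T1 \<union> Inr ` topspace T2 \<and>
                   openin T1 (Inl -` U) \<and> openin T2 (Inr -` U))"

text \<open>Letters are pairs (x, b): b = True means the generator x, b = False its inverse.\<close>

fun fg_reduced :: "('a \<times> bool) list \<Rightarrow> bool" where
  "fg_reduced ((x, b) # (y, c) # ws) \<longleftrightarrow> \<not> (x = y \<and> b \<noteq> c) \<and> fg_reduced ((y, c) # ws)"
| "fg_reduced _ \<longleftrightarrow> True"

definition fg_cons :: "'a \<times> bool \<Rightarrow> ('a \<times> bool) list \<Rightarrow> ('a \<times> bool) list" where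
  "fg_cons l ws = (case ws of [] \<Rightarrow> [l]
     | l' # ws' \<Rightarrow> if fst l = fst l' \<and> snd l \<noteq> snd l' then ws' else l # ws)"

definition free_group :: "'a set \<Rightarrow> ('a \<times> bool) list monoid" where
  "free_group S =
     \<lparr>carrier = {w. fst ` set w \<subseteq> S \<and> fg_reduced w},
      mult = (\<lambda>u v. foldr fg_cons u v),
      one = []\<rparr>"

definition fg_gen :: "'a \<Rightarrow> ('a \<times> bool) list" where
  "fg_gen x = [(x, True)]"

definition free_ext :: "'b monoid \<Rightarrow> ('a \<Rightarrow> 'b) \<Rightarrow> ('a \<times> bool) list \<Rightarrow> 'b" where
  "free_ext H f w =
     foldr (\<lambda>(x, b) acc. (if b then f x else inv\<^bsub>H\<^esub> (f x)) \<otimes>\<^bsub>H\<^esub> acc) w \<one>\<^bsub>H\<^esub>"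

definition FM_top :: "'a topology \<Rightarrow> ('a \<times> bool) list topology" where
  "FM_top S = finest_group_topology (free_group (topspace S)) (\<lambda>T. continuous_map S T fg_gen)"

definition tau_top :: "'a monoid \<Rightarrow> 'a topology \<Rightarrow> 'a topology" where
  "tau_top G T = quotient_topology (FM_top T) (free_ext G id) (carrier G)"

definition fp_letter_ok :: "'a monoid \<Rightarrow> 'b monoid \<Rightarrow> 'a + 'b \<Rightarrow> bool" where
  "fp_letter_ok G1 G2 l = (case l of
      Inl a \<Rightarrow> a \<in> carrier G1 \<and> a \<noteq> \<one>\<^bsub>G1\<^esub>
    | Inr b \<Rightarrow> b \<in> carrier G2 \<and> b \<noteq> \<one>\<^bsub>G2\<^esub>)"

definition fp_cons :: "'a monoid \<Rightarrow> 'b monoid \<Rightarrow> 'a + 'b \<Rightarrow> ('a + 'b) list \<Rightarrow> ('a + 'b) list" where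
  "fp_cons G1 G2 l ws = (case (l, ws) of
      (Inl a, Inl a' # ws') \<Rightarrow>
         (if a \<otimes>\<^bsub>G1\<^esub> a' = \<one>\<^bsub>G1\<^esub> then ws' else Inl (a \<otimes>\<^bsub>G1\<^esub> a') # ws')
    | (Inr b, Inr b' # ws') \<Rightarrow>
         (if b \<otimes>\<^bsub>G2\<^esub> b' = \<one>\<^bsub>G2\<^esub> then ws' else Inr (b \<otimes>\<^bsub>G2\<^esub> b') # ws')
    | _ \<Rightarrow> l # ws)"

definition free_product :: "'a monoid \<Rightarrow> 'b monoid \<Rightarrow> ('a + 'b) list monoid" where
  "free_product G1 G2 =
     \<lparr>carrier = {ws. (\<forall>l \<in> set ws. fp_letter_ok G1 G2 l) \<and>
                     (\<forall>i. Suc i < length ws \<longrightarrow> isl (ws ! i) \<noteq> isl (ws ! Suc i))},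
      mult = (\<lambda>u v. foldr (fp_cons G1 G2) u v),
      one = []\<rparr>"

definition fp_inl :: "'a monoid \<Rightarrow> 'a \<Rightarrow> ('a + 'b) list" where
  "fp_inl G1 a = (if a = \<one>\<^bsub>G1\<^esub> then [] else [Inl a])"

definition fp_inr :: "'b monoid \<Rightarrow> 'b \<Rightarrow> ('a + 'b) list" where
  "fp_inr G2 b = (if b = \<one>\<^bsub>G2\<^esub> then [] else [Inr b])"

text \<open>Free topological product H1 * H2 of the topological groups (G1,T1), (G2,T2):
  the finest group topology on the free product making both canonical
  inclusions continuous (the coproduct in the category of topological groups).\<close>

definition free_top_product ::
  "'a monoid \<Rightarrow> 'a topology \<Rightarrow> 'b monoid \<Rightarrow> 'b topology \<Rightarrow> ('a + 'b) list topology" where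
  "free_top_product G1 T1 G2 T2 =
     finest_group_topology (free_product G1 G2)
       (\<lambda>T. continuous_map T1 T (fp_inl G1) \<and> continuous_map T2 T (fp_inr G2))"

end

theory Submission
  imports Defs
begin

text \<open>
  Write \<open>S = T1 \<squnion> T2\<close>, \<open>P = G1 * G2\<close> (reduced alternating words), \<open>k: F(S) \<rightarrow> P\<close> for the
  canonical homomorphism, \<open>Y = \<tau>(G1) * \<tau>(G2)\<close>, and \<open>Q\<close> for the quotient topology on \<open>P\<close>
  induced by \<open>k\<close> from \<open>F_M(S)\<close>.  The proof establishes:
  (1) \<open>k\<close> is surjective: a reduced word is the image of the positive word of its letters;
  (2) \<open>k: F_M(S) \<rightarrow> Y\<close> is continuous, by the universal property of \<open>F_M\<close>;
  (3) \<open>Q\<close> is a group topology: \<open>k\<close> is open for \<open>Q\<close>, so \<open>k \<times> k\<close> is a quotient map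
      through which multiplication on \<open>P\<close> factors;
  (4) the inclusions \<open>\<tau>(Gi) \<rightarrow> Q\<close> are continuous, because composed with the evaluation
      \<open>F_M(Gi) \<rightarrow> Gi\<close> they equal \<open>k\<close> composed with the continuous map \<open>F_M(Gi) \<rightarrow> F_M(S)\<close>.
  As \<open>Y\<close> is the finest group topology making the inclusions continuous, (3) and (4) show
  that \<open>Q\<close> is coarser than \<open>Y\<close>, and with (1) and (2) \<open>k\<close> is a quotient map.
\<close>

section \<open>Free groups\<close>

lemma fg_reduced_Cons_iff:
  "fg_reduced (a # w) \<longleftrightarrow>
     (case w of [] \<Rightarrow> True | b # _ \<Rightarrow> \<not> (fst a = fst b \<and> snd a \<noteq> snd b)) \<and> fg_reduced w"
  by (cases a; cases w) auto

lemma fg_cons_reduced: "fg_reduced w \<Longrightarrow> fg_reduced (fg_cons l w)"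
  by (cases w) (auto simp: fg_cons_def fg_reduced_Cons_iff)

lemma fg_cons_letters: "fst ` set (fg_cons l w) \<subseteq> insert (fst l) (fst ` set w)"
  by (cases w) (auto simp: fg_cons_def)

lemma foldr_fg_reduced: "fg_reduced w \<Longrightarrow> fg_reduced (foldr fg_cons u w)"
  by (induction u) (auto intro: fg_cons_reduced)

lemma foldr_fg_letters:
  "fst ` set u \<subseteq> S \<Longrightarrow> fst ` set w \<subseteq> S \<Longrightarrow> fst ` set (foldr fg_cons u w) \<subseteq> S"
proof (induction u)
  case (Cons a u)
  then show ?case
    using order_trans[OF fg_cons_letters[of a "foldr fg_cons u w"]] by simp
qed simp

lemma fg_cons_cancel:
  assumes "fg_reduced w"
  shows "fg_cons l (fg_cons (fst l, \<not> snd l) w) = w"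
proof (cases w)
  case (Cons a w')
  then show ?thesis
    using assms by (cases w') (auto simp: fg_cons_def fg_reduced_Cons_iff prod_eq_iff)
qed (simp add: fg_cons_def)

lemma foldr_fg_cons:
  assumes "fg_reduced w"
  shows "foldr fg_cons (fg_cons l u) w = fg_cons l (foldr fg_cons u w)"
proof (cases "\<exists>u'. u = (fst l, \<not> snd l) # u'")
  case True
  then obtain u' where u: "u = (fst l, \<not> snd l) # u'" by blast
  then have "fg_cons l u = u'" by (simp add: fg_cons_def)
  then show ?thesis
    using fg_cons_cancel[OF foldr_fg_reduced[OF assms], of l u'] u by simp
next
  case False
  then have "fg_cons l u = l # u"
    by (cases u) (auto simp: fg_cons_def prod_eq_iff)
  then show ?thesis by simp
qed

lemma foldr_fg_assoc:
  "fg_reduced w \<Longrightarrow> foldr fg_cons (foldr fg_cons u v) w = foldr fg_cons u (foldr fg_cons v w)"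
  by (induction u) (simp_all add: foldr_fg_cons)

definition fg_invw :: "('a \<times> bool) list \<Rightarrow> ('a \<times> bool) list" where
  "fg_invw w = rev (map (\<lambda>(x, b). (x, \<not> b)) w)"

lemma fg_invw_left: "fg_reduced w \<Longrightarrow> foldr fg_cons (fg_invw w) w = []"
proof (induction w)
  case (Cons a w)
  have "fg_cons (fst a, \<not> snd a) (a # w) = w" by (simp add: fg_cons_def)
  then show ?case
    using Cons by (cases a) (simp add: fg_invw_def fg_reduced_Cons_iff)
qed (simp add: fg_invw_def)

lemma fg_mult: "x \<otimes>\<^bsub>free_group S\<^esub> y = foldr fg_cons x y"
  by (simp add: free_group_def)

lemma fg_carrier: "x \<in> carrier (free_group S) \<longleftrightarrow> fst ` set x \<subseteq> S \<and> fg_reduced x"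
  by (simp add: free_group_def)

lemma fg_gen_closed: "x \<in> S \<Longrightarrow> fg_gen x \<in> carrier (free_group S)"
  by (simp add: fg_gen_def fg_carrier)

text \<open>A left inverse of a word is the reduction of its formal inverse.\<close>

theorem free_group_is_group: "group (free_group S)"
proof (rule groupI)
  fix x assume x: "x \<in> carrier (free_group S)"
  define y where "y = foldr fg_cons (fg_invw x) []"
  have "y \<in> carrier (free_group S)"
    using x foldr_fg_letters[of "fg_invw x" S "[]"] foldr_fg_reduced[of "[]" "fg_invw x"]
    by (auto simp: y_def fg_carrier fg_invw_def image_image split_def)
  moreover have "foldr fg_cons y x = []"
    using x by (simp add: y_def fg_carrier foldr_fg_assoc fg_invw_left)
  ultimately show "\<exists>y\<in>carrier (free_group S). y \<otimes>\<^bsub>free_group S\<^esub> x = \<one>\<^bsub>free_group S\<^esub>"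
    by (auto simp: fg_mult free_group_def)
next
  fix x y assume "x \<in> carrier (free_group S)" "y \<in> carrier (free_group S)"
  then show "x \<otimes>\<^bsub>free_group S\<^esub> y \<in> carrier (free_group S)"
    by (simp add: fg_mult fg_carrier foldr_fg_letters foldr_fg_reduced)
next
  fix x y z assume "z \<in> carrier (free_group S)"
  then show "x \<otimes>\<^bsub>free_group S\<^esub> y \<otimes>\<^bsub>free_group S\<^esub> z =
      x \<otimes>\<^bsub>free_group S\<^esub> (y \<otimes>\<^bsub>free_group S\<^esub> z)"
    by (simp add: fg_mult fg_carrier foldr_fg_assoc)
qed (simp_all add: free_group_def)

section \<open>Free products of two groups\<close>

lemma fp_cons_simps:
  "fp_cons G1 G2 l [] = [l]"
  "fp_cons G1 G2 (Inl a) (Inl a' # ws) =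
     (if a \<otimes>\<^bsub>G1\<^esub> a' = \<one>\<^bsub>G1\<^esub> then ws else Inl (a \<otimes>\<^bsub>G1\<^esub> a') # ws)"
  "fp_cons G1 G2 (Inr b) (Inr b' # ws) =
     (if b \<otimes>\<^bsub>G2\<^esub> b' = \<one>\<^bsub>G2\<^esub> then ws else Inr (b \<otimes>\<^bsub>G2\<^esub> b') # ws)"
  "fp_cons G1 G2 (Inl a) (Inr b # ws) = Inl a # Inr b # ws"
  "fp_cons G1 G2 (Inr b) (Inl a # ws) = Inr b # Inl a # ws"
  by (cases l; simp add: fp_cons_def)+

lemma fp_cons_alternating:
  "ws = [] \<or> isl (hd ws) \<noteq> isl l \<Longrightarrow> fp_cons G1 G2 l ws = l # ws"
  by (cases ws; cases l; cases "hd ws") (auto simp: fp_cons_simps)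

lemma fp_cons_Cons: "fp_cons G1 G2 l (l' # ws) = fp_cons G1 G2 l [l'] @ ws"
  by (cases l; cases l') (simp_all add: fp_cons_simps)

lemma fp_mult: "u \<otimes>\<^bsub>free_product G1 G2\<^esub> v = foldr (fp_cons G1 G2) u v"
  by (simp add: free_product_def)

lemma fp_carrier_Cons:
  "l # ws \<in> carrier (free_product G1 G2) \<longleftrightarrow>
     fp_letter_ok G1 G2 l \<and> ws \<in> carrier (free_product G1 G2) \<and>
     (ws = [] \<or> isl (hd ws) \<noteq> isl l)"
proof -
  have "(\<forall>i. Suc i < length (l # ws) \<longrightarrow> isl ((l # ws) ! i) \<noteq> isl ((l # ws) ! Suc i)) \<longleftrightarrow>
        (ws = [] \<or> isl (hd ws) \<noteq> isl l) \<and>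
        (\<forall>i. Suc i < length ws \<longrightarrow> isl (ws ! i) \<noteq> isl (ws ! Suc i))"
    by (cases ws) (auto simp: All_less_Suc2 nth_Cons split: nat.splits)
  then show ?thesis by (auto simp: free_product_def)
qed

lemma fp_carrier_letters:
  "ws \<in> carrier (free_product G1 G2) \<Longrightarrow> l \<in> set ws \<Longrightarrow> fp_letter_ok G1 G2 l"
  by (simp add: free_product_def)

text \<open>Swapping the summands turns words over \<open>(G1, G2)\<close> into words over \<open>(G2, G1)\<close>;
  this lets every statement about letters of the second factor be derived from the
  corresponding statement about the first factor.\<close>

definition fp_swap :: "'a + 'b \<Rightarrow> 'b + 'a" where
  "fp_swap = case_sum Inr Inl"

lemma fp_swap_simps [simp]:
  "fp_swap (Inl a) = Inr a" "fp_swap (Inr b) = Inl b"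
  "fp_swap (fp_swap l) = l" "isl (fp_swap l) \<longleftrightarrow> \<not> isl l"
  "fp_swap \<circ> fp_swap = id"
  by (cases l; simp add: fp_swap_def fun_eq_iff split: sum.split)+

lemma fp_letter_ok_swap [simp]: "fp_letter_ok G2 G1 (fp_swap l) \<longleftrightarrow> fp_letter_ok G1 G2 l"
  by (cases l) (simp_all add: fp_letter_ok_def)

lemma fp_cons_swap:
  "fp_cons G1 G2 l ws = map fp_swap (fp_cons G2 G1 (fp_swap l) (map fp_swap ws))"
  by (cases ws; cases l; cases "hd ws") (simp_all add: fp_cons_simps)

lemma foldr_fp_cons_swap:
  "foldr (fp_cons G1 G2) u ws =
     map fp_swap (foldr (fp_cons G2 G1) (map fp_swap u) (map fp_swap ws))"
proof (induction u)
  case (Cons l u)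
  have "foldr (fp_cons G1 G2) (l # u) ws =
      map fp_swap (fp_cons G2 G1 (fp_swap l) (map fp_swap (foldr (fp_cons G1 G2) u ws)))"
    by (simp only: foldr_Cons o_apply fp_cons_swap[of G1 G2 l])
  then show ?case using Cons.IH by simp
qed simp

lemma fp_carrier_swap:
  "map fp_swap ws \<in> carrier (free_product G2 G1) \<longleftrightarrow> ws \<in> carrier (free_product G1 G2)"
proof (induction ws)
  case (Cons l ws)
  then show ?case by (cases ws) (auto simp: fp_carrier_Cons)
qed (simp add: free_product_def)

lemma fp_inr_swap: "fp_inr G2 b = map fp_swap (fp_inl G2 b)"
  by (simp add: fp_inl_def fp_inr_def)

lemma fp_carrier_split_Inl:
  assumes "group G1" and "ws \<in> carrier (free_product G1 G2)"
  obtains c ws' where "c \<in> carrier G1" "ws' \<in> carrier (free_product G1 G2)"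
    "ws' = [] \<or> \<not> isl (hd ws')" "ws = fp_inl G1 c @ ws'"
proof (cases "ws \<noteq> [] \<and> isl (hd ws)")
  case True
  then obtain c ws' where "ws = Inl c # ws'" by (cases ws) (auto simp: isl_def)
  then show ?thesis
    using that[of c ws'] assms(2) by (auto simp: fp_carrier_Cons fp_letter_ok_def fp_inl_def)
next
  case False
  then show ?thesis
    using that[of "\<one>\<^bsub>G1\<^esub>" ws] assms by (auto simp: fp_inl_def group.is_monoid)
qed

lemma fp_inl_append_carrier:
  assumes "c \<in> carrier G1" "ws' \<in> carrier (free_product G1 G2)" "ws' = [] \<or> \<not> isl (hd ws')"
  shows "fp_inl G1 c @ ws' \<in> carrier (free_product G1 G2)"
  using assms by (auto simp: fp_inl_def fp_carrier_Cons fp_letter_ok_def)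

lemma fp_inl_mult_split:
  assumes "group G1" "a \<in> carrier G1" "c \<in> carrier G1" "ws' = [] \<or> \<not> isl (hd ws')"
  shows "fp_inl G1 a \<otimes>\<^bsub>free_product G1 G2\<^esub> (fp_inl G1 c @ ws') = fp_inl G1 (a \<otimes>\<^bsub>G1\<^esub> c) @ ws'"
proof -
  interpret G1: group G1 by fact
  show ?thesis
    using assms(2-4) fp_cons_alternating[of ws' "Inl a" G1 G2]
    by (cases "a = \<one>\<^bsub>G1\<^esub>"; cases "c = \<one>\<^bsub>G1\<^esub>") (auto simp: fp_inl_def fp_mult fp_cons_simps)
qed

lemma fp_inl_hom:
  assumes "group G1"
  shows "fp_inl G1 \<in> hom G1 (free_product G1 G2)"
proof (rule homI)
  fix a b assume "a \<in> carrier G1" "b \<in> carrier G1"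
  then show "fp_inl G1 (a \<otimes>\<^bsub>G1\<^esub> b) = fp_inl G1 a \<otimes>\<^bsub>free_product G1 G2\<^esub> fp_inl G1 b"
    using fp_inl_mult_split[OF assms, of a b "[]" G2] by simp
qed (simp add: fp_inl_def fp_carrier_Cons fp_letter_ok_def free_product_def)

lemma fp_cons_Inl:
  "a \<noteq> \<one>\<^bsub>G1\<^esub> \<Longrightarrow> fp_cons G1 G2 (Inl a) ws = fp_inl G1 a \<otimes>\<^bsub>free_product G1 G2\<^esub> ws"
  by (simp add: fp_inl_def fp_mult)

text \<open>Reduction keeps words reduced; the second factor is handled by swapping.\<close>

lemma fp_cons_Inl_closed:
  assumes G1: "group G1" and a: "fp_letter_ok G1 G2 (Inl a)"
    and ws: "ws \<in> carrier (free_product G1 G2)"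
  shows "fp_cons G1 G2 (Inl a) ws \<in> carrier (free_product G1 G2)"
proof -
  obtain c ws' where "c \<in> carrier G1" "ws' \<in> carrier (free_product G1 G2)"
    "ws' = [] \<or> \<not> isl (hd ws')" "ws = fp_inl G1 c @ ws'"
    using fp_carrier_split_Inl[OF G1 ws] .
  moreover have "a \<in> carrier G1" "a \<noteq> \<one>\<^bsub>G1\<^esub>" using a by (simp_all add: fp_letter_ok_def)
  ultimately show ?thesis
    using G1 by (simp add: fp_cons_Inl fp_inl_mult_split fp_inl_append_carrier group.is_monoid
        monoid.m_closed)
qed

lemma fp_cons_closed:
  assumes G1: "group G1" and G2: "group G2" and l: "fp_letter_ok G1 G2 l"
    and ws: "ws \<in> carrier (free_product G1 G2)"
  shows "fp_cons G1 G2 l ws \<in> carrier (free_product G1 G2)"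
proof (cases l)
  case (Inr b)
  have "fp_letter_ok G2 G1 (Inl b)" using l Inr by (simp add: fp_letter_ok_def)
  moreover have "map fp_swap ws \<in> carrier (free_product G2 G1)" using ws
    by (simp add: fp_carrier_swap)
  ultimately have "fp_cons G2 G1 (Inl b) (map fp_swap ws) \<in> carrier (free_product G2 G1)"
    by (rule fp_cons_Inl_closed[OF G2])
  then show ?thesis
    unfolding Inr fp_cons_swap[of G1 G2 "Inr b" ws] fp_carrier_swap by simp
qed (use fp_cons_Inl_closed[OF G1 _ ws] l in simp)

lemma foldr_fp_closed:
  assumes "group G1" "group G2" "\<forall>l\<in>set u. fp_letter_ok G1 G2 l"
    and "ws \<in> carrier (free_product G1 G2)"
  shows "foldr (fp_cons G1 G2) u ws \<in> carrier (free_product G1 G2)"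
  using assms(3) by (induction u) (simp_all add: assms fp_cons_closed)

lemma fp_two_letters_Inl:
  assumes G1: "group G1" and a: "fp_letter_ok G1 G2 (Inl a)" and l': "fp_letter_ok G1 G2 l'"
    and ws: "ws \<in> carrier (free_product G1 G2)"
  shows "fp_cons G1 G2 (Inl a) (fp_cons G1 G2 l' ws) =
           foldr (fp_cons G1 G2) (fp_cons G1 G2 (Inl a) [l']) ws"
proof (cases l')
  case (Inl a')
  interpret G1: group G1 by (rule G1)
  obtain c ws' where c: "c \<in> carrier G1" and ws': "ws' = [] \<or> \<not> isl (hd ws')"
    and split: "ws = fp_inl G1 c @ ws'"
    using fp_carrier_split_Inl[OF G1 ws] .
  have aa': "a \<in> carrier G1" "a \<noteq> \<one>\<^bsub>G1\<^esub>" "a' \<in> carrier G1" "a' \<noteq> \<one>\<^bsub>G1\<^esub>"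
    using a l' Inl by (simp_all add: fp_letter_ok_def)
  have "fp_cons G1 G2 (Inl a) [l'] = fp_inl G1 (a \<otimes>\<^bsub>G1\<^esub> a')"
    using Inl by (simp add: fp_cons_simps fp_inl_def)
  then show ?thesis
    using aa' c ws' by (simp add: Inl split fp_cons_Inl fp_inl_mult_split G1.m_assoc flip: fp_mult)
qed (simp add: fp_cons_simps)

lemma fp_two_letters:
  assumes G1: "group G1" and G2: "group G2"
    and l: "fp_letter_ok G1 G2 l" and l': "fp_letter_ok G1 G2 l'"
    and ws: "ws \<in> carrier (free_product G1 G2)"
  shows "fp_cons G1 G2 l (fp_cons G1 G2 l' ws) = foldr (fp_cons G1 G2) (fp_cons G1 G2 l [l']) ws"
proof (cases l)
  case (Inr b)
  have "fp_letter_ok G2 G1 (Inl b)" using l Inr by (simp add: fp_letter_ok_def)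
  then have "fp_cons G2 G1 (Inl b) (fp_cons G2 G1 (fp_swap l') (map fp_swap ws)) =
      foldr (fp_cons G2 G1) (fp_cons G2 G1 (Inl b) [fp_swap l']) (map fp_swap ws)"
    by (rule fp_two_letters_Inl[OF G2]) (simp_all add: l' ws fp_carrier_swap)
  then show ?thesis
    by (simp add: Inr fp_cons_swap[of G1 G2 "Inr b"] fp_cons_swap[of G1 G2 l' ws]
        foldr_fp_cons_swap[of G1 G2])
qed (use fp_two_letters_Inl[OF G1 _ l' ws] l in simp)

lemma foldr_fp_cons:
  assumes G1: "group G1" and G2: "group G2" and l: "fp_letter_ok G1 G2 l"
    and u: "\<forall>x\<in>set u. fp_letter_ok G1 G2 x" and w: "w \<in> carrier (free_product G1 G2)"
  shows "foldr (fp_cons G1 G2) (fp_cons G1 G2 l u) w = fp_cons G1 G2 l (foldr (fp_cons G1 G2) u w)"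
proof (cases u)
  case (Cons l' u')
  have rest: "foldr (fp_cons G1 G2) u' w \<in> carrier (free_product G1 G2)"
    using foldr_fp_closed[OF G1 G2 _ w, of u'] u Cons by simp
  have "fp_cons G1 G2 l u = fp_cons G1 G2 l [l'] @ u'"
    unfolding Cons by (rule fp_cons_Cons)
  then show ?thesis
    using fp_two_letters[OF G1 G2 l _ rest, of l'] u Cons by simp
qed (simp add: fp_cons_simps)

lemma foldr_fp_assoc:
  assumes G1: "group G1" and G2: "group G2"
    and u: "\<forall>x\<in>set u. fp_letter_ok G1 G2 x" and v: "v \<in> carrier (free_product G1 G2)"
    and w: "w \<in> carrier (free_product G1 G2)"
  shows "foldr (fp_cons G1 G2) (foldr (fp_cons G1 G2) u v) w =
           foldr (fp_cons G1 G2) u (foldr (fp_cons G1 G2) v w)"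
  using u
proof (induction u)
  case (Cons l u)
  have "\<forall>x\<in>set (foldr (fp_cons G1 G2) u v). fp_letter_ok G1 G2 x"
    using foldr_fp_closed[OF G1 G2 _ v, of u] Cons.prems fp_carrier_letters by fastforce
  then show ?case using Cons foldr_fp_cons[OF G1 G2 _ _ w] by simp
qed simp

definition fp_inv_letter :: "'a monoid \<Rightarrow> 'b monoid \<Rightarrow> 'a + 'b \<Rightarrow> 'a + 'b" where
  "fp_inv_letter G1 G2 = map_sum (\<lambda>a. inv\<^bsub>G1\<^esub> a) (\<lambda>b. inv\<^bsub>G2\<^esub> b)"

lemma fp_inv_letter_ok:
  assumes "group G1" "group G2" "fp_letter_ok G1 G2 l"
  shows "fp_letter_ok G1 G2 (fp_inv_letter G1 G2 l)"
  using assms by (cases l) (auto simp: fp_letter_ok_def fp_inv_letter_def group.inv_eq_1_iff)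

lemma fp_inv_letter_cancel:
  assumes "group G1" "group G2" "fp_letter_ok G1 G2 l"
  shows "fp_cons G1 G2 (fp_inv_letter G1 G2 l) (l # ws) = ws"
  using assms by (cases l) (auto simp: fp_letter_ok_def fp_inv_letter_def fp_cons_simps group.l_inv)

lemma fp_left_inv:
  assumes "group G1" "group G2" "ws \<in> carrier (free_product G1 G2)"
  shows "foldr (fp_cons G1 G2) (rev (map (fp_inv_letter G1 G2) ws)) ws = []"
  using assms(3)
proof (induction ws)
  case (Cons l ws)
  then show ?case by (simp add: fp_carrier_Cons fp_inv_letter_cancel[OF assms(1,2)])
qed simp

theorem free_product_is_group:
  assumes G1: "group G1" and G2: "group G2"
  shows "group (free_product G1 G2)"
proof (rule groupI)
  fix x assume x: "x \<in> carrier (free_product G1 G2)"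
  define iw where "iw = rev (map (fp_inv_letter G1 G2) x)"
  have iw: "\<forall>l\<in>set iw. fp_letter_ok G1 G2 l"
    unfolding iw_def using fp_inv_letter_ok[OF G1 G2] fp_carrier_letters[OF x] by auto
  have nil: "[] \<in> carrier (free_product G1 G2)" by (simp add: free_product_def)
  define y where "y = foldr (fp_cons G1 G2) iw []"
  have "y \<in> carrier (free_product G1 G2)"
    unfolding y_def by (rule foldr_fp_closed[OF G1 G2 iw nil])
  moreover have "foldr (fp_cons G1 G2) y x = []"
    using fp_left_inv[OF G1 G2 x, folded iw_def]
    by (simp add: y_def foldr_fp_assoc[OF G1 G2 iw nil x])
  ultimately show "\<exists>y\<in>carrier (free_product G1 G2). y \<otimes>\<^bsub>free_product G1 G2\<^esub> x = \<one>\<^bsub>free_product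
      G1 G2\<^esub>"
    by (auto simp: fp_mult free_product_def)
next
  fix x y z assume "x \<in> carrier (free_product G1 G2)" "y \<in> carrier (free_product G1 G2)"
    "z \<in> carrier (free_product G1 G2)"
  then show "x \<otimes>\<^bsub>free_product G1 G2\<^esub> y \<otimes>\<^bsub>free_product G1 G2\<^esub> z =
      x \<otimes>\<^bsub>free_product G1 G2\<^esub> (y \<otimes>\<^bsub>free_product G1 G2\<^esub> z)"
    unfolding fp_mult using foldr_fp_assoc[OF G1 G2] fp_carrier_letters by blast
next
  fix x y assume "x \<in> carrier (free_product G1 G2)" "y \<in> carrier (free_product G1 G2)"
  then show "x \<otimes>\<^bsub>free_product G1 G2\<^esub> y \<in> carrier (free_product G1 G2)"
    unfolding fp_mult using foldr_fp_closed[OF G1 G2] fp_carrier_letters by blast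
qed (simp_all add: free_product_def)

lemma fp_inr_hom:
  assumes "group G2"
  shows "fp_inr G2 \<in> hom G2 (free_product G1 G2)"
proof (rule homI)
  fix a b assume "a \<in> carrier G2" "b \<in> carrier G2"
  then have "fp_inl G2 (a \<otimes>\<^bsub>G2\<^esub> b) = fp_inl G2 a \<otimes>\<^bsub>free_product G2 G1\<^esub> fp_inl G2 b"
    by (rule hom_mult[OF fp_inl_hom[OF assms]])
  then show "fp_inr G2 (a \<otimes>\<^bsub>G2\<^esub> b) = fp_inr G2 a \<otimes>\<^bsub>free_product G1 G2\<^esub> fp_inr G2 b"
    by (simp add: fp_inr_swap fp_mult foldr_fp_cons_swap[of G1 G2])
qed (simp add: fp_inr_def fp_carrier_Cons fp_letter_ok_def free_product_def)

section \<open>Evaluation of words\<close>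

definition fg_letter :: "'b monoid \<Rightarrow> ('a \<Rightarrow> 'b) \<Rightarrow> 'a \<times> bool \<Rightarrow> 'b" where
  "fg_letter H f l = (if snd l then f (fst l) else inv\<^bsub>H\<^esub> (f (fst l)))"

lemma free_ext_simps:
  "free_ext H f [] = \<one>\<^bsub>H\<^esub>"
  "free_ext H f (l # w) = fg_letter H f l \<otimes>\<^bsub>H\<^esub> free_ext H f w"
  by (cases l; simp add: free_ext_def fg_letter_def)+

lemma fg_letter_closed: "group H \<Longrightarrow> f (fst l) \<in> carrier H \<Longrightarrow> fg_letter H f l \<in> carrier H"
  by (simp add: fg_letter_def)

lemma free_ext_closed:
  "group H \<Longrightarrow> \<forall>l\<in>set w. f (fst l) \<in> carrier H \<Longrightarrow> free_ext H f w \<in> carrier H"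
  by (induction w) (simp_all add: free_ext_simps fg_letter_closed group.is_monoid monoid.m_closed)

lemma free_ext_fg_cons:
  assumes H: "group H" and f: "\<forall>l\<in>set (a # w). f (fst l) \<in> carrier H"
  shows "free_ext H f (fg_cons a w) = fg_letter H f a \<otimes>\<^bsub>H\<^esub> free_ext H f w"
proof (cases "\<exists>w'. w = (fst a, \<not> snd a) # w'")
  case True
  interpret H: group H by (rule H)
  obtain w' where w: "w = (fst a, \<not> snd a) # w'" using True by blast
  have fa: "f (fst a) \<in> carrier H" and rest: "free_ext H f w' \<in> carrier H"
    using f free_ext_closed[OF H, where w=w' and f=f] w by auto
  have "fg_letter H f a \<otimes>\<^bsub>H\<^esub> fg_letter H f (fst a, \<not> snd a) = \<one>\<^bsub>H\<^esub>"
    using fa by (simp add: fg_letter_def)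
  then have "fg_letter H f a \<otimes>\<^bsub>H\<^esub> free_ext H f w = free_ext H f w'"
    using fa rest fg_letter_closed[OF H, where f=f and l=a]
      fg_letter_closed[OF H, where f=f and l="(fst a, \<not> snd a)"]
    by (simp add: w free_ext_simps flip: H.m_assoc)
  then show ?thesis using w by (simp add: fg_cons_def)
next
  case False
  then have "fg_cons a w = a # w" by (cases w) (auto simp: fg_cons_def prod_eq_iff)
  then show ?thesis by (simp add: free_ext_simps)
qed

lemma free_ext_hom:
  assumes H: "group H" and f: "f \<in> A \<rightarrow> carrier H"
  shows "free_ext H f \<in> hom (free_group A) H"
proof (rule homI)
  fix x assume "x \<in> carrier (free_group A)"
  then show "free_ext H f x \<in> carrier H"
    using f by (auto simp: fg_carrier intro!: free_ext_closed[OF H])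
next
  fix x y assume "x \<in> carrier (free_group A)" "y \<in> carrier (free_group A)"
  then have fx: "\<forall>l\<in>set x. f (fst l) \<in> carrier H" and fy: "\<forall>l\<in>set y. f (fst l) \<in> carrier H"
    using f by (auto simp: fg_carrier)
  have "free_ext H f (foldr fg_cons x y) = free_ext H f x \<otimes>\<^bsub>H\<^esub> free_ext H f y"
    using fx
  proof (induction x)
    case (Cons a x)
    have "fst ` set (foldr fg_cons x y) \<subseteq> {z. f z \<in> carrier H}"
      using Cons.prems fy by (intro foldr_fg_letters) auto
    then show ?case
      using Cons H free_ext_fg_cons[OF H, where f=f and a=a and w="foldr fg_cons x y"]
        fg_letter_closed[OF H, where f=f and l=a] free_ext_closed[OF H, where w=x and f=f]
            free_ext_closed[OF H fy]
      by (auto simp: free_ext_simps group.is_monoid monoid.m_assoc)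
  qed (use H free_ext_closed[OF H fy] in \<open>simp add: free_ext_simps group.is_monoid\<close>)
  then show "free_ext H f (x \<otimes>\<^bsub>free_group A\<^esub> y) = free_ext H f x \<otimes>\<^bsub>H\<^esub> free_ext H f y"
    by (simp add: fg_mult)
qed

lemma free_ext_gen: "group H \<Longrightarrow> f x \<in> carrier H \<Longrightarrow> free_ext H f (fg_gen x) = f x"
  by (simp add: fg_gen_def free_ext_simps fg_letter_def group.is_monoid)

lemma free_ext_hom_comp:
  assumes H: "group H" and K: "group K" and h: "h \<in> hom H K"
    and f: "\<forall>l\<in>set w. f (fst l) \<in> carrier H"
  shows "h (free_ext H f w) = free_ext K (h \<circ> f) w"
  using f
proof (induction w)
  case (Cons a w)
  interpret gh: group_hom H K h using H K h by (simp add: group_hom_def group_hom_axioms_def)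
  have "h (fg_letter H f a) = fg_letter K (h \<circ> f) a" using Cons.prems by (simp add: fg_letter_def)
  then show ?case
    using Cons free_ext_closed[OF H, where w=w and f=f] fg_letter_closed[OF H, where f=f and l=a]
    by (simp add: free_ext_simps del: comp_apply)
qed (use H K h in \<open>simp add: free_ext_simps hom_one\<close>)

lemma free_ext_cong:
  "\<forall>l\<in>set w. f (fst l) = g (fst l) \<Longrightarrow> free_ext H f w = free_ext H g w"
  by (induction w) (simp_all add: free_ext_simps fg_letter_def)

section \<open>Quotient topologies and disjoint unions\<close>

lemma openin_quotient_topology:
  "openin (quotient_topology X f Y) U \<longleftrightarrow> U \<subseteq> Y \<and> openin X {x \<in> topspace X. f x \<in> U}"
proof -
  have preimage_Int: "{x \<in> topspace X. f x \<in> S \<inter> T} =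
      {x \<in> topspace X. f x \<in> S} \<inter> {x \<in> topspace X. f x \<in> T}" for S T by auto
  have preimage_Union: "{x \<in> topspace X. f x \<in> \<Union>K} = (\<Union>S\<in>K. {x \<in> topspace X. f x \<in> S})"
    for K by auto
  have "istopology (\<lambda>U. U \<subseteq> Y \<and> openin X {x \<in> topspace X. f x \<in> U})"
    unfolding istopology_def preimage_Int preimage_Union by auto
  then show ?thesis by (simp add: quotient_topology_def)
qed

lemma topspace_quotient_topology:
  assumes "f \<in> topspace X \<rightarrow> Y"
  shows "topspace (quotient_topology X f Y) = Y"
proof -
  have "openin (quotient_topology X f Y) Y"
    using assms by (auto simp: openin_quotient_topology Pi_iff
        intro: back_subst[of "openin X", OF openin_topspace])
  then have "Y \<subseteq> topspace (quotient_topology X f Y)" by (rule openin_subset)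
  moreover have "topspace (quotient_topology X f Y) \<subseteq> Y"
    unfolding topspace_def openin_quotient_topology by auto
  ultimately show ?thesis by blast
qed

lemma quotient_map_quotient_topology:
  assumes "f ` topspace X = Y"
  shows "quotient_map X (quotient_topology X f Y) f"
  using assms topspace_quotient_topology[of f X Y]
  by (auto simp: quotient_map_def openin_quotient_topology)

lemma quotient_map_if_quotient_topology_coarser:
  assumes cont: "continuous_map X Y f" and surj: "f ` topspace X = topspace Y"
    and coarser: "\<And>U. openin (quotient_topology X f (topspace Y)) U \<Longrightarrow> openin Y U"
  shows "quotient_map X Y f"
  unfolding quotient_map_def
proof (intro conjI allI impI iffI)
  fix U assume "U \<subseteq> topspace Y" "openin X {x \<in> topspace X. f x \<in> U}"
  then show "openin Y U" by (simp add: coarser openin_quotient_topology)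
qed (use surj cont in \<open>auto simp: continuous_map_def\<close>)

lemma continuous_map_quotient_topologies:
  assumes j: "continuous_map W X j" and m: "m \<in> topspace W \<rightarrow> B"
    and k: "k \<in> topspace X \<rightarrow> C" and h: "h \<in> B \<rightarrow> C"
    and commute: "\<And>w. w \<in> topspace W \<Longrightarrow> h (m w) = k (j w)"
  shows "continuous_map (quotient_topology W m B) (quotient_topology X k C) h"
  unfolding continuous_map_def
proof (intro conjI allI impI)
  show "h \<in> topspace (quotient_topology W m B) \<rightarrow> topspace (quotient_topology X k C)"
    using m k h by (simp add: topspace_quotient_topology)
next
  fix U assume "openin (quotient_topology X k C) U"
  then have "openin X {x \<in> topspace X. k x \<in> U}" by (simp add: openin_quotient_topology)
  then have "openin W {w \<in> topspace W. j w \<in> {x \<in> topspace X. k x \<in> U}}"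
    using j unfolding continuous_map_def by blast
  moreover have "{w \<in> topspace W. j w \<in> {x \<in> topspace X. k x \<in> U}} =
      {w \<in> topspace W. m w \<in> {b \<in> topspace (quotient_topology W m B). h b \<in> U}}"
    using j m commute by (auto simp: topspace_quotient_topology continuous_map_def)
  ultimately show "openin (quotient_topology W m B) {b \<in> topspace (quotient_topology W m B). h b
      \<in> U}"
    using m by (simp add: openin_quotient_topology topspace_quotient_topology)
qed

lemma openin_disjoint_union_topology:
  "openin (disjoint_union_topology T1 T2) U \<longleftrightarrow>
     U \<subseteq> Inl ` topspace T1 \<union> Inr ` topspace T2 \<and> openin T1 (Inl -` U) \<and> openin T2 (Inr -` U)"
proof -
  have "istopology (\<lambda>U. U \<subseteq> Inl ` topspace T1 \<union> Inr ` topspace T2 \<and>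
                        openin T1 (Inl -` U) \<and> openin T2 (Inr -` U))"
    by (auto simp: istopology_def vimage_Union)
  then show ?thesis by (simp add: disjoint_union_topology_def)
qed

lemma topspace_disjoint_union_topology:
  "topspace (disjoint_union_topology T1 T2) = Inl ` topspace T1 \<union> Inr ` topspace T2"
proof -
  have "openin (disjoint_union_topology T1 T2) (Inl ` topspace T1 \<union> Inr ` topspace T2)"
    by (simp add: openin_disjoint_union_topology inj_vimage_image_eq vimage_def image_def)
  then have "Inl ` topspace T1 \<union> Inr ` topspace T2 \<subseteq> topspace (disjoint_union_topology T1 T2)"
    by (rule openin_subset)
  moreover have "topspace (disjoint_union_topology T1 T2) \<subseteq> Inl ` topspace T1 \<union> Inr ` topspace T2"
    unfolding topspace_def openin_disjoint_union_topology by auto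
  ultimately show ?thesis by blast
qed

lemma continuous_map_Inl_disjoint_union: "continuous_map T1 (disjoint_union_topology T1 T2) Inl"
  and continuous_map_Inr_disjoint_union: "continuous_map T2 (disjoint_union_topology T1 T2) Inr"
  unfolding continuous_map_def topspace_disjoint_union_topology
  by (auto simp: openin_disjoint_union_topology dest: openin_subset
      intro: back_subst[of "openin T1"] back_subst[of "openin T2"])

lemma continuous_map_from_disjoint_union:
  assumes "continuous_map T1 Y (g \<circ> Inl)" and "continuous_map T2 Y (g \<circ> Inr)"
  shows "continuous_map (disjoint_union_topology T1 T2) Y g"
proof -
  have "Inl -` {z \<in> topspace (disjoint_union_topology T1 T2). g z \<in> U} = {x \<in> topspace T1. (g \<circ>
      Inl) x \<in> U}"
    "Inr -` {z \<in> topspace (disjoint_union_topology T1 T2). g z \<in> U} = {x \<in> topspace T2. (g \<circ>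
        Inr) x \<in> U}"
    for U by (auto simp: topspace_disjoint_union_topology)
  then show ?thesis
    using assms unfolding continuous_map_def openin_disjoint_union_topology
    by (auto simp: topspace_disjoint_union_topology)
qed

section \<open>Group topologies: joins, pullbacks and finest group topologies\<close>

definition indiscrete_topology :: "'a set \<Rightarrow> 'a topology" where
  "indiscrete_topology A = topology (\<lambda>U. U = {} \<or> U = A)"

lemma openin_indiscrete_topology: "openin (indiscrete_topology A) U \<longleftrightarrow> U = {} \<or> U = A"
proof -
  have "istopology (\<lambda>U. U = {} \<or> U = A)"
    unfolding istopology_def by (auto simp: Union_empty_conv)
  then show ?thesis by (simp add: indiscrete_topology_def)
qed

lemma topspace_indiscrete_topology [simp]: "topspace (indiscrete_topology A) = A"
  unfolding topspace_def openin_indiscrete_topology by blast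

lemma continuous_map_indiscrete_topology:
  "continuous_map X (indiscrete_topology A) f \<longleftrightarrow> f \<in> topspace X \<rightarrow> A"
proof -
  have "{x \<in> topspace X. f x \<in> A} = topspace X" if "f \<in> topspace X \<rightarrow> A" using that by auto
  then show ?thesis by (auto simp: continuous_map_def openin_indiscrete_topology)
qed

definition join_topology :: "'a topology set \<Rightarrow> 'a topology" where
  "join_topology \<T> = topology_generated_by (\<Union>T\<in>\<T>. Collect (openin T))"

lemma topspace_join_topology:
  assumes "\<T> \<noteq> {}" "\<forall>T\<in>\<T>. topspace T = A"
  shows "topspace (join_topology \<T>) = A"
proof -
  have "\<Union>(\<Union>T\<in>\<T>. Collect (openin T)) = (\<Union>T\<in>\<T>. topspace T)"
    unfolding topspace_def by blast
  then show ?thesis using assms by (simp add: join_topology_def)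
qed

lemma openin_join_topology:
  assumes "T \<in> \<T>" "openin T U"
  shows "openin (join_topology \<T>) U"
  unfolding join_topology_def by (rule topology_generated_by_Basis) (use assms in blast)

lemma continuous_map_join_topology:
  assumes ne: "\<T> \<noteq> {}" and top: "\<forall>T\<in>\<T>. topspace T = A"
    and cont: "\<forall>T\<in>\<T>. continuous_map X T f"
  shows "continuous_map X (join_topology \<T>) f"
  unfolding continuous_map_def
proof (intro conjI allI impI)
  obtain T where "T \<in> \<T>" using ne by blast
  then show "f \<in> topspace X \<rightarrow> topspace (join_topology \<T>)"
    using top cont by (simp add: topspace_join_topology[OF ne top] continuous_map_def)
next
  fix U assume "openin (join_topology \<T>) U"
  then have "generate_topology_on (\<Union>T\<in>\<T>. Collect (openin T)) U"
    by (simp add: join_topology_def openin_topology_generated_by_iff)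
  then show "openin X {x \<in> topspace X. f x \<in> U}"
  proof (induction rule: generate_topology_on.induct)
    case (Int a b)
    have "{x \<in> topspace X. f x \<in> a \<inter> b} = {x \<in> topspace X. f x \<in> a} \<inter> {x \<in> topspace X. f x \<in> b}"
      by auto
    then show ?case using Int.IH by (simp add: openin_Int)
  next
    case (UN K)
    have eq: "{x \<in> topspace X. f x \<in> \<Union>K} = (\<Union>k\<in>K. {x \<in> topspace X. f x \<in> k})" by auto
    show ?case unfolding eq using UN.IH by (intro openin_Union) auto
  next
    case (Basis s)
    then obtain T where "T \<in> \<T>" "openin T s" by blast
    then show ?case using cont unfolding continuous_map_def by blast
  qed simp
qed

lemma continuous_map_finer:
  assumes "topspace X = topspace Y" and "\<And>U. openin Y U \<Longrightarrow> openin X U"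
  shows "continuous_map X Y (\<lambda>x. x)"
  unfolding continuous_map_def
proof (intro conjI allI impI)
  fix U assume "openin Y U"
  moreover then have "{x \<in> topspace X. x \<in> U} = U" using assms(1) openin_subset by blast
  ultimately show "openin X {x \<in> topspace X. x \<in> U}" using assms(2) by simp
qed (use assms(1) in auto)

lemma group_topology_indiscrete:
  assumes "group G"
  shows "group_topology G (indiscrete_topology (carrier G))"
proof -
  interpret group G by fact
  show ?thesis by (auto simp: group_topology_def continuous_map_indiscrete_topology)
qed

lemma group_topology_join:
  assumes ne: "\<T> \<noteq> {}" and gt: "\<forall>T\<in>\<T>. group_topology G T"
  shows "group_topology G (join_topology \<T>)"
proof -
  define J where "J = join_topology \<T>"
  have top: "\<forall>T\<in>\<T>. topspace T = carrier G" using gt by (simp add: group_topology_def)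
  then have tJ: "topspace J = carrier G" unfolding J_def by (rule topspace_join_topology[OF ne])
  have id: "continuous_map J T (\<lambda>x. x)" if "T \<in> \<T>" for T
    using that tJ top by (intro continuous_map_finer) (auto simp: J_def openin_join_topology)
  have "continuous_map (prod_topology J J) T (\<lambda>(x, y). x \<otimes>\<^bsub>G\<^esub> y)" if "T \<in> \<T>" for T
  proof -
    have "continuous_map (prod_topology J J) (prod_topology T T) (\<lambda>(x, y). ((\<lambda>x. x) x, (\<lambda>x. x) y))"
      unfolding continuous_map_prod_top using id[OF that] by simp
    then have "continuous_map (prod_topology J J) T
        ((\<lambda>(x, y). x \<otimes>\<^bsub>G\<^esub> y) \<circ> (\<lambda>(x, y). ((\<lambda>x. x) x, (\<lambda>x. x) y)))"
      by (rule continuous_map_compose) (use gt that in \<open>simp add: group_topology_def\<close>)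
    then show ?thesis by (simp add: o_def case_prod_unfold)
  qed
  moreover have "continuous_map J T (\<lambda>x. inv\<^bsub>G\<^esub> x)" if "T \<in> \<T>" for T
  proof -
    have "continuous_map J T ((\<lambda>x. inv\<^bsub>G\<^esub> x) \<circ> (\<lambda>x. x))"
      by (rule continuous_map_compose[OF id[OF that]]) (use gt that in \<open>simp add:
          group_topology_def\<close>)
    then show ?thesis by (simp add: o_def)
  qed
  ultimately show ?thesis
    using tJ unfolding group_topology_def J_def
    by (simp add: continuous_map_join_topology[OF ne top])
qed

lemma finest_group_topology:
  fixes G :: "'a monoid"
  assumes G: "group G" and P0: "P (indiscrete_topology (carrier G))"
    and Pjoin: "P (join_topology {T. group_topology G T \<and> P T})"
  shows "group_topology G (finest_group_topology G P)"
    and "P (finest_group_topology G P)"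
    and "group_topology G T \<Longrightarrow> P T \<Longrightarrow> openin T U \<Longrightarrow> openin (finest_group_topology G P) U"
proof -
  define J where "J = join_topology {T. group_topology G T \<and> P T}"
  have gJ: "group_topology G J"
    unfolding J_def using group_topology_indiscrete[OF G] P0
    by (intro group_topology_join) auto
  have finer: "\<forall>T. group_topology G T \<and> P T \<longrightarrow> (\<forall>U. openin T U \<longrightarrow> openin J U)"
    by (auto simp: J_def intro: openin_join_topology)
  have "finest_group_topology G P = J"
    unfolding finest_group_topology_def
  proof (rule the_equality)
    fix T assume "group_topology G T \<and> P T \<and>
      (\<forall>T'. group_topology G T' \<and> P T' \<longrightarrow> (\<forall>U. openin T' U \<longrightarrow> openin T U))"
    then show "T = J" using gJ Pjoin finer unfolding topology_eq J_def by blast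
  qed (use gJ Pjoin finer in \<open>simp add: J_def\<close>)
  then show "group_topology G (finest_group_topology G P)" "P (finest_group_topology G P)"
    and "group_topology G T \<Longrightarrow> P T \<Longrightarrow> openin T U \<Longrightarrow> openin (finest_group_topology G P) U"
    using gJ Pjoin finer by (simp_all add: J_def)
qed

lemma group_topology_pullback:
  assumes G: "group G" and H: "group H" and h: "h \<in> hom G H" and TH: "group_topology H TH"
  shows "group_topology G (pullback_topology (carrier G) h TH)"
proof -
  interpret gh: group_hom G H h using G H h by (simp add: group_hom_def group_hom_axioms_def)
  define PB where "PB = pullback_topology (carrier G) h TH"
  have tTH: "topspace TH = carrier H" using TH by (simp add: group_topology_def)
  have tPB: "topspace PB = carrier G"
    unfolding PB_def topspace_pullback_topology tTH using gh.hom_closed by auto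
  have hc: "continuous_map PB TH h"
    using continuous_map_pullback[OF continuous_map_id, of "carrier G" h TH] by (simp add: PB_def)
  have "continuous_map (prod_topology PB PB) (prod_topology TH TH) (\<lambda>(x, y). (h x, h y))"
    unfolding continuous_map_prod_top using hc by simp
  then have "continuous_map (prod_topology PB PB) TH ((\<lambda>(x, y). x \<otimes>\<^bsub>H\<^esub> y) \<circ> (\<lambda>(x, y). (h x, h y)))"
    using TH by (intro continuous_map_compose) (auto simp: group_topology_def)
  then have "continuous_map (prod_topology PB PB) TH (h \<circ> (\<lambda>(x, y). x \<otimes>\<^bsub>G\<^esub> y))"
    by (rule continuous_map_eq) (auto simp: tPB)
  then have m: "continuous_map (prod_topology PB PB) PB (\<lambda>(x, y). x \<otimes>\<^bsub>G\<^esub> y)"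
    unfolding PB_def by (rule continuous_map_pullback') (auto simp: tPB[unfolded PB_def])
  have "continuous_map PB TH ((\<lambda>x. inv\<^bsub>H\<^esub> x) \<circ> h)"
    using TH hc by (intro continuous_map_compose) (auto simp: group_topology_def)
  then have "continuous_map PB TH (h \<circ> (\<lambda>x. inv\<^bsub>G\<^esub> x))"
    by (rule continuous_map_eq) (auto simp: tPB)
  then have i: "continuous_map PB PB (\<lambda>x. inv\<^bsub>G\<^esub> x)"
    unfolding PB_def by (rule continuous_map_pullback') (auto simp: tPB[unfolded PB_def])
  show ?thesis using tPB m i unfolding group_topology_def PB_def by simp
qed

section \<open>Quotients of topological groups\<close>

lemma open_map_prod:
  assumes f: "open_map X X' f" and g: "open_map Y Y' g"
  shows "open_map (prod_topology X Y) (prod_topology X' Y') (\<lambda>(x, y). (f x, g y))"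
  unfolding open_map_def
proof (intro allI impI)
  fix W assume W: "openin (prod_topology X Y) W"
  show "openin (prod_topology X' Y') ((\<lambda>(x, y). (f x, g y)) ` W)"
    unfolding openin_prod_topology_alt
  proof (intro allI impI)
    fix x' y' assume "(x', y') \<in> (\<lambda>(x, y). (f x, g y)) ` W"
    then obtain x y where xy: "(x, y) \<in> W" "x' = f x" "y' = g y" by auto
    obtain U V where UV: "openin X U" "openin Y V" "x \<in> U" "y \<in> V" "U \<times> V \<subseteq> W"
      using W[unfolded openin_prod_topology_alt, rule_format, OF xy(1)] by blast
    show "\<exists>U' V'. openin X' U' \<and> openin Y' V' \<and> x' \<in> U' \<and> y' \<in> V' \<and>
        U' \<times> V' \<subseteq> (\<lambda>(x, y). (f x, g y)) ` W"
    proof (intro exI conjI)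
      show "openin X' (f ` U)" "openin Y' (g ` V)"
        using f g UV by (simp_all add: open_map_def)
      show "x' \<in> f ` U" "y' \<in> g ` V" using xy UV by auto
      show "f ` U \<times> g ` V \<subseteq> (\<lambda>(x, y). (f x, g y)) ` W"
      proof clarify
        fix a b assume "a \<in> U" "b \<in> V"
        then show "(f a, g b) \<in> (\<lambda>(x, y). (f x, g y)) ` W"
          using UV(5) by (intro image_eqI[of _ _ "(a, b)"]) auto
      qed
    qed
  qed
qed

text \<open>A homomorphism from a topological group is open for the quotient topology it induces
  on its target: the saturation of an open set is a union of translates of it.\<close>

lemma open_map_quotient_group:
  assumes G: "group G" and H: "group H" and k: "k \<in> hom G H"
    and gt: "group_topology G X"
  shows "open_map X (quotient_topology X k (carrier H)) k"
  unfolding open_map_def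
proof (intro allI impI)
  interpret gh: group_hom G H k using G H k by (simp add: group_hom_def group_hom_axioms_def)
  have tX: "topspace X = carrier G" using gt by (simp add: group_topology_def)
  fix V assume V: "openin X V"
  then have VG: "V \<subseteq> carrier G" using openin_subset tX by blast
  define N where "N = {n \<in> carrier G. k n = \<one>\<^bsub>H\<^esub>}"
  have saturation: "{x \<in> topspace X. k x \<in> k ` V} =
      (\<Union>n\<in>N. {x \<in> topspace X. x \<otimes>\<^bsub>G\<^esub> n \<in> V})"
  proof (intro equalityI subsetI)
    fix x assume "x \<in> {x \<in> topspace X. k x \<in> k ` V}"
    then obtain v where x: "x \<in> carrier G" and v: "v \<in> V" and kv: "k x = k v" using tX by auto
    have vG: "v \<in> carrier G" using v VG by blast
    have "inv\<^bsub>G\<^esub> x \<otimes>\<^bsub>G\<^esub> v \<in> N" using x vG kv by (simp add: N_def)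
    moreover have "x \<otimes>\<^bsub>G\<^esub> (inv\<^bsub>G\<^esub> x \<otimes>\<^bsub>G\<^esub> v) = v"
      using x vG by (simp flip: gh.G.m_assoc)
    ultimately show "x \<in> (\<Union>n\<in>N. {x \<in> topspace X. x \<otimes>\<^bsub>G\<^esub> n \<in> V})"
      using v x tX by (intro UN_I[of "inv\<^bsub>G\<^esub> x \<otimes>\<^bsub>G\<^esub> v"]) auto
  next
    fix x assume "x \<in> (\<Union>n\<in>N. {x \<in> topspace X. x \<otimes>\<^bsub>G\<^esub> n \<in> V})"
    then obtain n where "n \<in> carrier G" "k n = \<one>\<^bsub>H\<^esub>" and x: "x \<in> carrier G"
      and xn: "x \<otimes>\<^bsub>G\<^esub> n \<in> V"
      using tX by (auto simp: N_def)
    then have "k x = k (x \<otimes>\<^bsub>G\<^esub> n)" by simp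
    then show "x \<in> {x \<in> topspace X. k x \<in> k ` V}" using x xn tX by auto
  qed
  have "openin X {x \<in> topspace X. x \<otimes>\<^bsub>G\<^esub> n \<in> V}" if "n \<in> N" for n
  proof -
    have "continuous_map X (prod_topology X X) (\<lambda>x. (x, n))"
      using that by (intro continuous_map_pairedI) (auto simp: tX N_def)
    then have "continuous_map X X ((\<lambda>(x, y). x \<otimes>\<^bsub>G\<^esub> y) \<circ> (\<lambda>x. (x, n)))"
      using gt by (intro continuous_map_compose) (auto simp: group_topology_def)
    then show ?thesis using V by (simp add: continuous_map_def o_def)
  qed
  then have "openin X {x \<in> topspace X. k x \<in> k ` V}" unfolding saturation by blast
  moreover have "k ` V \<subseteq> carrier H" using VG by auto
  ultimately show "openin (quotient_topology X k (carrier H)) (k ` V)"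
    by (simp add: openin_quotient_topology)
qed

text \<open>Since the homomorphism is open, the square of it is a quotient
  map, through which multiplication factors.\<close>

lemma quotient_group_topology:
  assumes G: "group G" and H: "group H" and k: "k \<in> hom G H"
    and surj: "k ` carrier G = carrier H" and gt: "group_topology G X"
  shows "group_topology H (quotient_topology X k (carrier H))"
proof -
  interpret gh: group_hom G H k using G H k by (simp add: group_hom_def group_hom_axioms_def)
  define Q where "Q = quotient_topology X k (carrier H)"
  have tX: "topspace X = carrier G" using gt by (simp add: group_topology_def)
  have q: "quotient_map X Q k"
    unfolding Q_def by (rule quotient_map_quotient_topology) (simp add: tX surj)
  then have tQ: "topspace Q = carrier H" using surj tX by (simp add: quotient_map_def)
  have qc: "continuous_map X Q k" using q by (rule quotient_imp_continuous_map)
  have "quotient_map (prod_topology X X) (prod_topology Q Q) (\<lambda>(x, y). (k x, k y))"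
  proof (rule continuous_open_imp_quotient_map)
    show "continuous_map (prod_topology X X) (prod_topology Q Q) (\<lambda>(x, y). (k x, k y))"
      using qc by (simp add: continuous_map_prod_top)
    show "open_map (prod_topology X X) (prod_topology Q Q) (\<lambda>(x, y). (k x, k y))"
      using open_map_quotient_group[OF G H k gt] by (simp add: open_map_prod Q_def)
    show "(\<lambda>(x, y). (k x, k y)) ` topspace (prod_topology X X) = topspace (prod_topology Q Q)"
      using surj by (simp add: tX tQ image_paired_Times)
  qed
  moreover have "continuous_map (prod_topology X X) Q ((\<lambda>(x, y). x \<otimes>\<^bsub>H\<^esub> y) \<circ> (\<lambda>(x, y). (k x, k y)))"
  proof (rule continuous_map_eq)
    show "continuous_map (prod_topology X X) Q (k \<circ> (\<lambda>(x, y). x \<otimes>\<^bsub>G\<^esub> y))"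
      using gt qc by (intro continuous_map_compose) (simp_all add: group_topology_def)
  qed (auto simp: tX)
  ultimately have m: "continuous_map (prod_topology Q Q) Q (\<lambda>(x, y). x \<otimes>\<^bsub>H\<^esub> y)"
    by (rule continuous_compose_quotient_map)
  have "continuous_map X Q ((\<lambda>x. inv\<^bsub>H\<^esub> x) \<circ> k)"
  proof (rule continuous_map_eq)
    show "continuous_map X Q (k \<circ> (\<lambda>x. inv\<^bsub>G\<^esub> x))"
      using gt qc by (intro continuous_map_compose) (simp_all add: group_topology_def)
  qed (auto simp: tX)
  with q have i: "continuous_map Q Q (\<lambda>x. inv\<^bsub>H\<^esub> x)"
    by (rule continuous_compose_quotient_map)
  show ?thesis using tQ m i by (simp add: group_topology_def Q_def)
qed

section \<open>The Markov free topological group, \<open>\<tau>\<close>, and the free topological product\<close>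

lemma FM_top_properties:
  shows FM_group_topology: "group_topology (free_group (topspace S)) (FM_top S)"
    and FM_gen_continuous: "continuous_map S (FM_top S) fg_gen"
    and FM_finest: "group_topology (free_group (topspace S)) T \<Longrightarrow> continuous_map S T fg_gen \<Longrightarrow>
      openin T U \<Longrightarrow> openin (FM_top S) U"
proof -
  let ?F = "free_group (topspace S)"
  let ?\<T> = "{T. group_topology ?F T \<and> continuous_map S T fg_gen}"
  have P0: "continuous_map S (indiscrete_topology (carrier ?F)) fg_gen"
    by (simp add: continuous_map_indiscrete_topology fg_gen_closed)
  have "?\<T> \<noteq> {}" using group_topology_indiscrete[OF free_group_is_group] P0 by blast
  then have "continuous_map S (join_topology ?\<T>) fg_gen"
    by (rule continuous_map_join_topology) (auto simp: group_topology_def)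
  note finest = finest_group_topology[OF free_group_is_group P0 this]
  show "group_topology ?F (FM_top S)" "continuous_map S (FM_top S) fg_gen"
    and "group_topology ?F T \<Longrightarrow> continuous_map S T fg_gen \<Longrightarrow> openin T U \<Longrightarrow> openin (FM_top S) U"
    using finest by (simp_all add: FM_top_def)
qed

lemma topspace_FM_top: "topspace (FM_top S) = carrier (free_group (topspace S))"
  using FM_group_topology[of S] by (simp add: group_topology_def)

lemma FM_universal:
  assumes H: "group H" and h: "h \<in> hom (free_group (topspace S)) H"
    and TH: "group_topology H TH" and c: "continuous_map S TH (h \<circ> fg_gen)"
  shows "continuous_map (FM_top S) TH h"
proof -
  let ?F = "free_group (topspace S)"
  let ?PB = "pullback_topology (carrier ?F) h TH"
  have "group_topology ?F ?PB" by (rule group_topology_pullback[OF free_group_is_group H h TH])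
  moreover have "continuous_map S ?PB fg_gen"
    by (rule continuous_map_pullback'[OF c]) (auto simp: fg_gen_closed)
  ultimately have finer: "openin (FM_top S) U" if "openin ?PB U" for U
    using FM_finest that by blast
  have "continuous_map (FM_top S) ?PB (\<lambda>x. x)"
    using TH hom_in_carrier[OF h] by (intro continuous_map_finer finer)
      (auto simp: topspace_FM_top topspace_pullback_topology group_topology_def)
  then have "continuous_map (FM_top S) TH (h \<circ> (\<lambda>x. x))"
    by (rule continuous_map_compose) (rule continuous_map_pullback[OF continuous_map_id,
        simplified])
  then show ?thesis by (simp add: o_def)
qed

lemma free_top_product_properties:
  assumes G1: "group G1" and G2: "group G2"
    and S1: "topspace S1 = carrier G1" and S2: "topspace S2 = carrier G2"
  shows free_top_product_group_topology:
      "group_topology (free_product G1 G2) (free_top_product G1 S1 G2 S2)"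
    and free_top_product_finest:
      "group_topology (free_product G1 G2) T \<Longrightarrow> continuous_map S1 T (fp_inl G1) \<Longrightarrow>
       continuous_map S2 T (fp_inr G2) \<Longrightarrow> openin T U \<Longrightarrow> openin (free_top_product G1 S1 G2 S2) U"
    and free_top_product_inl_continuous: "continuous_map S1 (free_top_product G1 S1 G2 S2)
        (fp_inl G1)"
    and free_top_product_inr_continuous: "continuous_map S2 (free_top_product G1 S1 G2 S2)
        (fp_inr G2)"
proof -
  let ?P = "free_product G1 G2"
  let ?Q = "\<lambda>T. continuous_map S1 T (fp_inl G1) \<and> continuous_map S2 T (fp_inr G2)"
  let ?\<T> = "{T. group_topology ?P T \<and> ?Q T}"
  have gP: "group ?P" by (rule free_product_is_group[OF G1 G2])
  have Q0: "?Q (indiscrete_topology (carrier ?P))"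
    using hom_in_carrier[OF fp_inl_hom[OF G1]] hom_in_carrier[OF fp_inr_hom[OF G2]]
    by (auto simp: continuous_map_indiscrete_topology S1 S2)
  have ne: "?\<T> \<noteq> {}" using group_topology_indiscrete[OF gP] Q0 by blast
  have top: "\<forall>T\<in>?\<T>. topspace T = carrier ?P" by (auto simp: group_topology_def)
  have "?Q (join_topology ?\<T>)" by (intro conjI continuous_map_join_topology[OF ne top]) auto
  note finest = finest_group_topology[OF gP Q0 this]
  show "group_topology ?P (free_top_product G1 S1 G2 S2)"
    and "group_topology ?P T \<Longrightarrow> continuous_map S1 T (fp_inl G1) \<Longrightarrow>
       continuous_map S2 T (fp_inr G2) \<Longrightarrow> openin T U \<Longrightarrow> openin (free_top_product G1 S1 G2 S2) U"
    and "continuous_map S1 (free_top_product G1 S1 G2 S2) (fp_inl G1)"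
    and "continuous_map S2 (free_top_product G1 S1 G2 S2) (fp_inr G2)"
    using finest by (simp_all add: free_top_product_def)
qed

lemma tau_top_properties:
  assumes G: "group G" and T: "topspace T = carrier G"
  shows topspace_tau_top: "topspace (tau_top G T) = carrier G"
    and continuous_map_to_tau_top: "continuous_map T (tau_top G T) (\<lambda>x. x)"
proof -
  let ?m = "free_ext G id"
  have "?m \<in> hom (free_group (topspace T)) G" by (rule free_ext_hom[OF G]) (simp add: T)
  then have "?m ` topspace (FM_top T) \<subseteq> carrier G"
    by (auto simp: topspace_FM_top dest: hom_in_carrier)
  moreover have "x \<in> ?m ` topspace (FM_top T)" if "x \<in> carrier G" for x
  proof
    show "x = ?m (fg_gen x)" using free_ext_gen[OF G, of id] that by simp
    show "fg_gen x \<in> topspace (FM_top T)" using that T by (simp add: topspace_FM_top fg_gen_closed)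
  qed
  ultimately have onto: "?m ` topspace (FM_top T) = carrier G" by blast
  then have q: "quotient_map (FM_top T) (tau_top G T) ?m"
    unfolding tau_top_def by (rule quotient_map_quotient_topology)
  then show "topspace (tau_top G T) = carrier G"
    using onto by (simp add: quotient_map_def)
  have "continuous_map T (tau_top G T) (?m \<circ> fg_gen)"
    using FM_gen_continuous quotient_imp_continuous_map[OF q] by (rule continuous_map_compose)
  then show "continuous_map T (tau_top G T) (\<lambda>x. x)"
    by (rule continuous_map_eq) (simp add: free_ext_gen[OF G] T)
qed

section \<open>The canonical map onto the free topological product\<close>

text \<open>Key step: for a homomorphism \<open>\<iota>: G \<rightarrow> P\<close> which on points factors through a continuous
  map \<open>\<phi>\<close> into a space \<open>S\<close>, \<open>\<iota>\<close> is continuous from \<open>\<tau>(G)\<close> into \<open>P\<close> with the quotient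
  topology of the evaluation map \<open>F_M(S) \<rightarrow> P\<close>, since \<open>\<iota> \<circ> m\<^sub>G = \<kappa> \<circ> F_M(\<phi>)\<close>.\<close>

lemma tau_top_continuous_into_quotient:
  assumes G: "group G" and T: "topspace T = carrier G" and P: "group P"
    and \<iota>: "\<iota> \<in> hom G P" and \<phi>: "continuous_map T S \<phi>"
    and f: "f \<in> topspace S \<rightarrow> carrier P"
    and factor: "\<And>x. x \<in> carrier G \<Longrightarrow> f (\<phi> x) = \<iota> x"
  shows "continuous_map (tau_top G T) (quotient_topology (FM_top S) (free_ext P f) (carrier P)) \<iota>"
proof -
  let ?F = "free_group (topspace S)" and ?F1 = "free_group (topspace T)"
  define j where "j = free_ext ?F (fg_gen \<circ> \<phi>)"
  have \<phi>_map: "\<phi> \<in> topspace T \<rightarrow> topspace S" using \<phi> by (rule continuous_map_funspace)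
  then have gen: "fg_gen \<circ> \<phi> \<in> topspace T \<rightarrow> carrier ?F" by (simp add: Pi_iff fg_gen_closed)
  have jh: "j \<in> hom ?F1 ?F" unfolding j_def by (rule free_ext_hom[OF free_group_is_group gen])
  have "continuous_map T (FM_top S) (fg_gen \<circ> \<phi>)"
    using \<phi> FM_gen_continuous by (rule continuous_map_compose)
  then have "continuous_map T (FM_top S) (j \<circ> fg_gen)"
    by (rule continuous_map_eq)
      (use gen free_ext_gen[OF free_group_is_group, where f = "fg_gen \<circ> \<phi>"] in \<open>auto simp: j_def
          Pi_iff\<close>)
  then have j: "continuous_map (FM_top T) (FM_top S) j"
    by (rule FM_universal[OF free_group_is_group jh FM_group_topology])
  have \<kappa>: "free_ext P f \<in> hom ?F P" by (rule free_ext_hom[OF P f])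
  have m: "free_ext G id \<in> hom ?F1 G" by (rule free_ext_hom[OF G]) (simp add: T)
  have commute: "\<iota> (free_ext G id w) = free_ext P f (j w)" if "w \<in> topspace (FM_top T)" for w
  proof -
    have w: "\<forall>l\<in>set w. fst l \<in> carrier G" using that T by (auto simp: topspace_FM_top fg_carrier)
    have "\<iota> (free_ext G id w) = free_ext P (\<iota> \<circ> id) w"
      by (rule free_ext_hom_comp[OF G P \<iota>]) (use w in simp)
    also have "\<dots> = free_ext P (free_ext P f \<circ> (fg_gen \<circ> \<phi>)) w"
    proof (rule free_ext_cong)
      have "free_ext P f (fg_gen (\<phi> x)) = \<iota> x" if "x \<in> carrier G" for x
        using that hom_in_carrier[OF \<iota> that] factor free_ext_gen[OF P, where f = f and x = "\<phi> x"]
        by simp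
      then show "\<forall>l\<in>set w. (\<iota> \<circ> id) (fst l) = (free_ext P f \<circ> (fg_gen \<circ> \<phi>)) (fst l)"
        using w by simp
    qed
    also have "\<dots> = free_ext P f (j w)"
      unfolding j_def using w gen T
      by (intro free_ext_hom_comp[OF free_group_is_group P \<kappa>, symmetric]) (auto simp: Pi_iff)
    finally show ?thesis .
  qed
  show ?thesis
    unfolding tau_top_def
    by (rule continuous_map_quotient_topologies[OF j])
      (use hom_in_carrier[OF m] hom_in_carrier[OF \<kappa>] hom_in_carrier[OF \<iota>] commute in
        \<open>auto simp: topspace_FM_top\<close>)
qed

lemma case_sum_fp_inl_fp_inr_funcset:
  assumes "group G1" "topspace T1 = carrier G1" "group G2" "topspace T2 = carrier G2"
  shows "case_sum (fp_inl G1) (fp_inr G2)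
           \<in> topspace (disjoint_union_topology T1 T2) \<rightarrow> carrier (free_product G1 G2)"
  using hom_in_carrier[OF fp_inl_hom[OF assms(1)]] hom_in_carrier[OF fp_inr_hom[OF assms(3)]] assms
  by (auto simp: topspace_disjoint_union_topology)

lemma free_ext_positive_word:
  assumes "ws \<in> carrier (free_product G1 G2)"
  shows "free_ext (free_product G1 G2) (case_sum (fp_inl G1) (fp_inr G2)) (map (\<lambda>l. (l, True))
      ws) = ws"
  using assms
proof (induction ws)
  case (Cons l ws)
  then have "fp_letter_ok G1 G2 l" and "ws \<in> carrier (free_product G1 G2)"
    and "ws = [] \<or> isl (hd ws) \<noteq> isl l"
    by (simp_all add: fp_carrier_Cons)
  then show ?case
    using Cons.IH fp_cons_alternating[of ws l G1 G2]
    by (cases l) (auto simp: free_ext_simps fg_letter_def fp_mult fp_letter_ok_def fp_inl_def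
        fp_inr_def)
qed (simp add: free_ext_simps free_product_def)

lemma fg_reduced_positive_word: "fg_reduced (map (\<lambda>l. (l, True)) ws)"
  by (induction ws rule: induct_list012) simp_all

lemma free_product_canonical_onto:
  assumes G1: "group G1" and T1: "topspace T1 = carrier G1"
    and G2: "group G2" and T2: "topspace T2 = carrier G2"
  shows "free_ext (free_product G1 G2) (case_sum (fp_inl G1) (fp_inr G2))
           ` topspace (FM_top (disjoint_union_topology T1 T2)) = carrier (free_product G1 G2)"
    (is "?\<kappa> ` topspace (FM_top ?S) = carrier ?P")
proof
  show "?\<kappa> ` topspace (FM_top ?S) \<subseteq> carrier ?P"
    using hom_in_carrier[OF free_ext_hom[OF free_product_is_group[OF G1 G2]
          case_sum_fp_inl_fp_inr_funcset[OF G1 T1 G2 T2]]]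
    by (auto simp: topspace_FM_top)
next
  show "carrier ?P \<subseteq> ?\<kappa> ` topspace (FM_top ?S)"
  proof
    fix ws assume ws: "ws \<in> carrier ?P"
    have "fst ` set (map (\<lambda>l. (l, True)) ws) \<subseteq> topspace ?S"
      using fp_carrier_letters[OF ws] T1 T2
      by (force simp: fp_letter_ok_def topspace_disjoint_union_topology split: sum.splits)
    then have "map (\<lambda>l. (l, True)) ws \<in> topspace (FM_top ?S)"
      by (simp add: topspace_FM_top fg_carrier fg_reduced_positive_word)
    then show "ws \<in> ?\<kappa> ` topspace (FM_top ?S)"
      using free_ext_positive_word[OF ws] by (metis image_eqI)
  qed
qed

text \<open>The canonical homomorphism \<open>k: F_M(T1 \<squnion> T2) \<rightarrow> \<tau>(G1) * \<tau>(G2)\<close> is continuous, by the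
  universal property of \<open>F_M\<close>: on generators it is the union of the two inclusions.\<close>

lemma free_product_canonical_continuous:
  assumes G1: "group G1" and T1: "topspace T1 = carrier G1"
    and G2: "group G2" and T2: "topspace T2 = carrier G2"
  shows "continuous_map (FM_top (disjoint_union_topology T1 T2))
           (free_top_product G1 (tau_top G1 T1) G2 (tau_top G2 T2))
           (free_ext (free_product G1 G2) (case_sum (fp_inl G1) (fp_inr G2)))"
proof -
  let ?S = "disjoint_union_topology T1 T2" and ?P = "free_product G1 G2"
    and ?f = "case_sum (fp_inl G1) (fp_inr G2)"
    and ?Y = "free_top_product G1 (tau_top G1 T1) G2 (tau_top G2 T2)"
  have gP: "group ?P" by (rule free_product_is_group[OF G1 G2])
  note f = case_sum_fp_inl_fp_inr_funcset[OF G1 T1 G2 T2]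
  note tau = topspace_tau_top[OF G1 T1] topspace_tau_top[OF G2 T2]
  have "continuous_map T1 ?Y (fp_inl G1 \<circ> (\<lambda>x. x))"
    using continuous_map_to_tau_top[OF G1 T1] free_top_product_inl_continuous[OF G1 G2 tau]
    by (rule continuous_map_compose)
  moreover have "continuous_map T2 ?Y (fp_inr G2 \<circ> (\<lambda>x. x))"
    using continuous_map_to_tau_top[OF G2 T2] free_top_product_inr_continuous[OF G1 G2 tau]
    by (rule continuous_map_compose)
  ultimately have "continuous_map ?S ?Y ?f"
    by (intro continuous_map_from_disjoint_union) (simp_all add: o_def)
  then have "continuous_map ?S ?Y (free_ext ?P ?f \<circ> fg_gen)"
    by (rule continuous_map_eq) (use f free_ext_gen[OF gP, where f = ?f] in \<open>auto simp: Pi_iff\<close>)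
  then show ?thesis
    using FM_universal[OF gP free_ext_hom[OF gP f] free_top_product_group_topology[OF G1 G2 tau]]
    by simp
qed

text \<open>The quotient topology \<open>Q\<close> of \<open>k\<close> is a group topology in which both inclusions of
  \<open>\<tau>(G1)\<close> and \<open>\<tau>(G2)\<close> are continuous; since \<open>\<tau>(G1) * \<tau>(G2)\<close> is the finest such
  topology, \<open>Q\<close> is coarser than it.\<close>

lemma free_product_canonical_quotient_coarser:
  assumes G1: "group G1" and T1: "topspace T1 = carrier G1"
    and G2: "group G2" and T2: "topspace T2 = carrier G2"
    and U: "openin (quotient_topology (FM_top (disjoint_union_topology T1 T2))
              (free_ext (free_product G1 G2) (case_sum (fp_inl G1) (fp_inr G2)))
              (carrier (free_product G1 G2))) U"
  shows "openin (free_top_product G1 (tau_top G1 T1) G2 (tau_top G2 T2)) U"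
proof -
  let ?S = "disjoint_union_topology T1 T2" and ?P = "free_product G1 G2"
  let ?Q = "quotient_topology (FM_top ?S) (free_ext ?P (case_sum (fp_inl G1) (fp_inr G2)))
             (carrier ?P)"
  have gP: "group ?P" by (rule free_product_is_group[OF G1 G2])
  note f = case_sum_fp_inl_fp_inr_funcset[OF G1 T1 G2 T2]
  have "group_topology ?P ?Q"
    using quotient_group_topology[OF free_group_is_group gP free_ext_hom[OF gP f] _
        FM_group_topology] free_product_canonical_onto[OF G1 T1 G2 T2]
    by (simp add: topspace_FM_top)
  moreover have "continuous_map (tau_top G1 T1) ?Q (fp_inl G1)"
    using tau_top_continuous_into_quotient[OF G1 T1 gP fp_inl_hom[OF G1]
        continuous_map_Inl_disjoint_union f]
    by simp
  moreover have "continuous_map (tau_top G2 T2) ?Q (fp_inr G2)"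
    using tau_top_continuous_into_quotient[OF G2 T2 gP fp_inr_hom[OF G2]
        continuous_map_Inr_disjoint_union f]
    by simp
  ultimately show ?thesis
    using free_top_product_finest[OF G1 G2 topspace_tau_top[OF G1 T1] topspace_tau_top[OF G2 T2]] U
    by blast
qed

theorem proposition3p10:
  fixes G1 :: "'a monoid" and T1 :: "'a topology"
    and G2 :: "'b monoid" and T2 :: "'b topology"
  assumes "group G1" and "topspace T1 = carrier G1"
    and "group G2" and "topspace T2 = carrier G2"
  shows "quotient_map
           (FM_top (disjoint_union_topology T1 T2))
           (free_top_product G1 (tau_top G1 T1) G2 (tau_top G2 T2))
           (free_ext (free_product G1 G2) (case_sum (fp_inl G1) (fp_inr G2)))"
proof -
  have "topspace (free_top_product G1 (tau_top G1 T1) G2 (tau_top G2 T2)) =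
      carrier (free_product G1 G2)"
    using free_top_product_group_topology[OF assms(1,3) topspace_tau_top[OF assms(1,2)]
        topspace_tau_top[OF assms(3,4)]]
    by (simp add: group_topology_def)
  then show ?thesis
    using free_product_canonical_continuous[OF assms] free_product_canonical_onto[OF assms]
      free_product_canonical_quotient_coarser[OF assms]
    by (intro quotient_map_if_quotient_topology_coarser) simp_all
qed

end
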